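(* Let $\beta>0$, $\beta'=\beta/2$. For each $n\ge1$ let $\lambda^{(n)}=(\lambda_1,\dots,\lambda_n)$ be a random vector in $\mathbb{R}^n$ with almost surely pairwise distinct coordinates, and let $w^{(n)}=(w_1,\dots,w_n)$ be independent of $\lambda^{(n)}$ with Dirichlet distribution with all parameters equal to $\beta'$; all random variables are defined on one probability space. Let $\hat\mu_n=\frac1n\sum_i\delta_{\lambda_i}$ and $\mu_n=\sum_i w_i\delta_{\lambda_i}$. Then $$d_K(\hat\mu_n,\mu_n)\xrightarrow[n\to\infty]{}0\quad\text{almost surely}.$$
   Context: For probability measures $\mu,\nu$ on $\mathbb{R}$ with distribution functions $F_\mu,F_\nu$, the Kolmogorov distance is $d_K(\mu,\nu)=\sup_{x\in\mathbb R}|F_\mu(x)-F_\nu(x)|$. *)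

theory Defs
  imports "HOL-Probability.Probability"
begin

text \<open>It is defined by its standard density
  Gamma(n a) / Gamma(a)^n * prod_i w_i^(a-1) on the open simplex, with respect to
  Lebesgue measure on the first n-1 coordinates, the last coordinate being 1 - sum of the others.\<close>
definition dirichlet_sym :: "nat \<Rightarrow> real \<Rightarrow> (nat \<Rightarrow> real) measure" where
  "dirichlet_sym n a =
     distr
       (density (PiM {..<n-1} (\<lambda>_. lborel))
          (\<lambda>x. ennreal (indicator {y. (\<forall>i<n-1. 0 < y i) \<and> (\<Sum>i<n-1. y i) < 1} x
             * (Gamma (real n * a) / Gamma a ^ n)
             * (\<Prod>i<n-1. x i powr (a - 1)) * (1 - (\<Sum>i<n-1. x i)) powr (a - 1))))
       (PiM {..<n} (\<lambda>_. borel))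
       (\<lambda>x. \<lambda>i\<in>{..<n}. if i < n - 1 then x i else 1 - (\<Sum>j<n-1. x j))"

definition atomic_cdf :: "nat \<Rightarrow> (nat \<Rightarrow> real) \<Rightarrow> (nat \<Rightarrow> real) \<Rightarrow> real \<Rightarrow> real" where
  "atomic_cdf n l w x = (\<Sum>i<n. if l i \<le> x then w i else 0)"

definition kolmogorov_dist :: "(real \<Rightarrow> real) \<Rightarrow> (real \<Rightarrow> real) \<Rightarrow> real" where
  "kolmogorov_dist F G = (SUP x. \<bar>F x - G x\<bar>)"

end

theory Submission
  imports Defs
begin

text \<open>
  At every point x both distribution functions are sums over the same index set
  A = {i. lambda_i <= x}, namely |A|/n and the sum of the w_i over A. This A is a lower set of the
  order the atoms induce on the indices; as the atoms are distinct, there is exactly one lower set of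
  each cardinality, and these sets are nested.
  Comparing A with the lower sets of cardinality floor(j n / N), j = 0, ..., N, bounds the Kolmogorov
  distance by delta + 1/N + 1/n as soon as each of these N + 1 grid sets deviates by at most delta.
  For a fixed set A independent of w, the sum of the w_i over A has the moments of a
  Beta(|A| beta', (n - |A|) beta') variable, whose mean is |A|/n and whose fourth central moment is at
  most 2 / (n beta')^2. Markov's inequality and a union bound over the grid make the probability of a
  deviation O(1/n^2), which is summable, and the Borel-Cantelli lemma concludes.
\<close>

section \<open>Dirichlet's integral\<close>

lemma nn_integral_Beta:
  fixes a c :: real
  assumes "a > 0" "c > 0"
  shows "(\<integral>\<^sup>+u. ennreal (indicator {0<..<1} u * (u powr (a - 1) * (1 - u) powr (c - 1))) \<partial>lborel)
         = ennreal (Beta a c)"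
proof -
  have "((\<lambda>u. u powr (a - 1) * (1 - u) powr (c - 1)) has_integral Beta a c) {0<..<1}"
    using has_integral_Beta_real[OF assms] by (simp add: has_integral_Icc_iff_Ioo)
  then have "(\<integral>\<^sup>+u. ennreal (u powr (a - 1) * (1 - u) powr (c - 1)) * indicator {0<..<1} u \<partial>lborel)
             = ennreal (Beta a c)"
    by (rule nn_integral_has_integral_lebesgue'[rotated]) auto
  then show ?thesis
    by (simp add: indicator_mult_ennreal mult.commute)
qed

lemma nn_integral_Beta_scaled:
  fixes t a c :: real
  assumes t: "t > 0" and a: "a > 0" and c: "c > 0"
  shows "(\<integral>\<^sup>+y. ennreal (indicator {0<..<t} y * (y powr (a - 1) * (t - y) powr (c - 1))) \<partial>lborel)
         = ennreal (t powr (a + c - 1) * Beta a c)"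
proof -
  let ?f = "\<lambda>y. ennreal (indicator {0<..<t} y * (y powr (a - 1) * (t - y) powr (c - 1)))"
  let ?g = "\<lambda>u. ennreal (indicator {0<..<1} u * (u powr (a - 1) * (1 - u) powr (c - 1)))"
  have scale: "?f (0 + t * u) = ennreal (t powr (a - 1) * t powr (c - 1)) * ?g u" for u
  proof -
    have "t * u \<in> {0<..<t} \<longleftrightarrow> u \<in> {0<..<1}"
      using t by (auto simp: zero_less_mult_iff)
    moreover have "t - t * u = t * (1 - u)"
      by (simp add: algebra_simps)
    ultimately show ?thesis
      using t by (auto simp: indicator_def powr_mult ennreal_mult'[symmetric] mult_ac)
  qed
  have "(\<integral>\<^sup>+y. ?f y \<partial>lborel) = ennreal t * (\<integral>\<^sup>+u. ?f (0 + t * u) \<partial>lborel)"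
    using t by (subst nn_integral_real_affine[where c = t and t = 0]) auto
  also have "\<dots> = ennreal t * (ennreal (t powr (a - 1) * t powr (c - 1)) * (\<integral>\<^sup>+u. ?g u \<partial>lborel))"
    unfolding scale by (subst nn_integral_cmult) auto
  also have "\<dots> = ennreal t * (ennreal (t powr (a - 1) * t powr (c - 1)) * ennreal (Beta a c))"
    unfolding nn_integral_Beta[OF a c] ..
  also have "\<dots> = ennreal (t powr (a + c - 1) * Beta a c)"
  proof -
    have "Beta a c \<ge> 0"
      using a c by (simp add: Beta_def Gamma_real_pos less_imp_le)
    moreover have "t * (t powr (a - 1) * t powr (c - 1) * Beta a c) = t powr (a + c - 1) * Beta a c"
      using t by (simp add: powr_add[symmetric] powr_mult_base algebra_simps)
    ultimately show ?thesis
      using t by (simp add: ennreal_mult'[symmetric] ennreal_mult[symmetric])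
  qed
  finally show ?thesis .
qed

definition open_simplex :: "'i set \<Rightarrow> real \<Rightarrow> ('i \<Rightarrow> real) set" where
  "open_simplex A t = {x. (\<forall>i\<in>A. 0 < x i) \<and> sum x A < t}"

text \<open>The last coordinate \<open>t - sum x A\<close> of the simplex is left implicit; it carries the parameter \<open>c\<close>.\<close>
definition simplex_kernel :: "'i set \<Rightarrow> real \<Rightarrow> ('i \<Rightarrow> real) \<Rightarrow> real \<Rightarrow> ('i \<Rightarrow> real) \<Rightarrow> real" where
  "simplex_kernel A t a c x =
     indicator (open_simplex A t) x * ((\<Prod>i\<in>A. x i powr (a i - 1)) * (t - sum x A) powr (c - 1))"

lemma simplex_kernel_nonneg: "0 \<le> simplex_kernel A t a c x"
  by (simp add: simplex_kernel_def prod_nonneg)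

lemma sets_open_simplex:
  assumes "finite A"
  shows "open_simplex A t \<inter> space (Pi\<^sub>M A (\<lambda>_. lborel)) \<in> sets (Pi\<^sub>M A (\<lambda>_. lborel))"
proof -
  have "open_simplex A t \<inter> space (Pi\<^sub>M A (\<lambda>_. lborel)) =
        Pi\<^sub>E A (\<lambda>_. {0<..}) \<inter> (\<lambda>x. sum x A) -` {..<t} \<inter> space (Pi\<^sub>M A (\<lambda>_. lborel))"
    by (auto simp: open_simplex_def space_PiM)
  also have "\<dots> \<in> sets (Pi\<^sub>M A (\<lambda>_. lborel))"
    using assms by measurable
  finally show ?thesis .
qed

lemma borel_measurable_simplex_kernel[measurable]:
  assumes "finite A"
  shows "simplex_kernel A t a c \<in> borel_measurable (Pi\<^sub>M A (\<lambda>_. lborel))"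
proof -
  have "(\<lambda>x. indicator (open_simplex A t \<inter> space (Pi\<^sub>M A (\<lambda>_. lborel))) x
              * ((\<Prod>i\<in>A. x i powr (a i - 1)) * (t - sum x A) powr (c - 1)))
        \<in> borel_measurable (Pi\<^sub>M A (\<lambda>_. lborel))"
    using sets_open_simplex[OF assms] assms by measurable
  then show ?thesis
    by (rule measurable_cong[THEN iffD1, rotated]) (auto simp: simplex_kernel_def indicator_def)
qed

lemma simplex_kernel_fun_upd:
  assumes "finite A" "b \<notin> A"
  shows "simplex_kernel (insert b A) t a c (x(b := y))
         = indicator {0<..<t} y * y powr (a b - 1) * simplex_kernel A (t - y) a c x"
proof -
  have sum_eq: "sum (x(b := y)) (insert b A) = y + sum x A"
    using assms by (auto intro!: sum.cong)
  have prod_eq: "(\<Prod>i\<in>insert b A. (x(b := y)) i powr (a i - 1)) = y powr (a b - 1) * (\<Prod>i\<in>A. x i powr (a i - 1))"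
    using assms by (auto intro!: prod.cong)
  have mem: "x(b := y) \<in> open_simplex (insert b A) t \<longleftrightarrow> 0 < y \<and> x \<in> open_simplex A (t - y)"
    using assms sum_eq by (auto simp: open_simplex_def algebra_simps)
  show ?thesis
  proof (cases "0 < y \<and> x \<in> open_simplex A (t - y)")
    case True
    then have "y < t"
      using sum_nonneg[of A x] by (force simp: open_simplex_def)
    with True mem have "x(b := y) \<in> open_simplex (insert b A) t" "y \<in> {0<..<t}" "x \<in> open_simplex A (t - y)"
      by auto
    then show ?thesis
      unfolding simplex_kernel_def sum_eq prod_eq indicator_simps by (simp add: algebra_simps)
  next
    case False
    then show ?thesis
      by (auto simp: simplex_kernel_def mem)
  qed
qed

text \<open>Dirichlet's integral: integrating out one coordinate leaves a scaled Beta integral.\<close>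
lemma nn_integral_simplex_kernel:
  fixes A :: "'i set" and a :: "'i \<Rightarrow> real"
  assumes "finite A" "t > 0" "\<And>i. i \<in> A \<Longrightarrow> a i > 0" "c > 0"
  shows "(\<integral>\<^sup>+x. simplex_kernel A t a c x \<partial>Pi\<^sub>M A (\<lambda>_. lborel))
         = ennreal (t powr (sum a A + c - 1) * ((\<Prod>i\<in>A. Gamma (a i)) * Gamma c / Gamma (sum a A + c)))"
  using assms
proof (induction A arbitrary: t c rule: finite_induct)
  case (empty t c)
  then show ?case
    by (simp add: PiM_empty simplex_kernel_def open_simplex_def Gamma_real_pos less_imp_neq[symmetric])
next
  case (insert b A t c)
  interpret product_sigma_finite "\<lambda>_. lborel"
    by standard
  define G where "G = (\<Prod>i\<in>A. Gamma (a i)) * Gamma c / Gamma (sum a A + c)"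
  have ab: "a b > 0"
    using insert.prems by simp
  have sA: "sum a A \<ge> 0"
    using insert.prems by (intro sum_nonneg) (auto intro: less_imp_le)
  have G: "G \<ge> 0"
    unfolding G_def using insert.prems sA
    by (intro divide_nonneg_nonneg mult_nonneg_nonneg prod_nonneg) (auto intro: Gamma_real_pos less_imp_le)
  have inner: "(\<integral>\<^sup>+x. simplex_kernel A (t - y) a c x \<partial>Pi\<^sub>M A (\<lambda>_. lborel))
               = ennreal (G * (t - y) powr (sum a A + c - 1))" if "y \<in> {0<..<t}" for y
    using that insert by (subst insert.IH) (auto simp: G_def mult_ac)
  have "(\<integral>\<^sup>+x. simplex_kernel (insert b A) t a c x \<partial>Pi\<^sub>M (insert b A) (\<lambda>_. lborel))
        = (\<integral>\<^sup>+y. \<integral>\<^sup>+x. simplex_kernel (insert b A) t a c (x(b := y)) \<partial>Pi\<^sub>M A (\<lambda>_. lborel) \<partial>lborel)"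
    using insert.hyps by (intro product_nn_integral_insert_rev) auto
  also have "\<dots> = (\<integral>\<^sup>+y. ennreal (indicator {0<..<t} y * y powr (a b - 1))
                    * (\<integral>\<^sup>+x. simplex_kernel A (t - y) a c x \<partial>Pi\<^sub>M A (\<lambda>_. lborel)) \<partial>lborel)"
    using insert.hyps
    by (simp add: simplex_kernel_fun_upd simplex_kernel_nonneg ennreal_mult nn_integral_cmult)
  also have "\<dots> = (\<integral>\<^sup>+y. ennreal G * ennreal (indicator {0<..<t} y
                    * (y powr (a b - 1) * (t - y) powr ((sum a A + c) - 1))) \<partial>lborel)"
    using G by (intro nn_integral_cong) (auto simp: inner indicator_def ennreal_mult'[symmetric] mult_ac)
  also have "\<dots> = ennreal G * ennreal (t powr (a b + (sum a A + c) - 1) * Beta (a b) (sum a A + c))"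
    using insert.prems ab sA by (simp add: nn_integral_cmult nn_integral_Beta_scaled)
  also have "\<dots> = ennreal (t powr (sum a (insert b A) + c - 1)
                   * ((\<Prod>i\<in>insert b A. Gamma (a i)) * Gamma c / Gamma (sum a (insert b A) + c)))"
  proof -
    have "Gamma (sum a A + c) \<noteq> 0"
      using sA insert.prems by (intro less_imp_neq[symmetric] Gamma_real_pos) auto
    then show ?thesis
      using insert.hyps G by (simp add: G_def Beta_def ennreal_mult'[symmetric] field_simps)
  qed
  finally show ?case .
qed

section \<open>The symmetric Dirichlet distribution\<close>

definition simplex_embed :: "nat \<Rightarrow> (nat \<Rightarrow> real) \<Rightarrow> nat \<Rightarrow> real" where
  "simplex_embed n x = (\<lambda>i\<in>{..<n}. if i < n - 1 then x i else 1 - (\<Sum>j<n-1. x j))"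

lemma dirichlet_sym_eq_distr_density:
  "dirichlet_sym n a =
     distr (density (Pi\<^sub>M {..<n-1} (\<lambda>_. lborel))
              (\<lambda>x. ennreal (Gamma (real n * a) / Gamma a ^ n * simplex_kernel {..<n-1} 1 (\<lambda>_. a) a x)))
       (Pi\<^sub>M {..<n} (\<lambda>_. borel)) (simplex_embed n)"
  unfolding dirichlet_sym_def simplex_embed_def simplex_kernel_def open_simplex_def
  by (simp add: Ball_def mult_ac)

lemma measurable_simplex_embed[measurable]:
  "simplex_embed n \<in> Pi\<^sub>M {..<n-1} (\<lambda>_. lborel) \<rightarrow>\<^sub>M Pi\<^sub>M {..<n} (\<lambda>_. borel)"
  unfolding simplex_embed_def
proof (rule measurable_restrict)
  fix i
  show "(\<lambda>x. if i < n - 1 then x i else 1 - (\<Sum>j<n-1. x j)) \<in> borel_measurable (Pi\<^sub>M {..<n-1} (\<lambda>_. lborel))"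
    by (cases "i < n - 1") simp_all
qed

lemma sets_dirichlet_sym[measurable_cong]:
  "sets (dirichlet_sym n a) = sets (Pi\<^sub>M {..<n} (\<lambda>_. borel))"
  by (simp add: dirichlet_sym_eq_distr_density)

lemma space_dirichlet_sym: "space (dirichlet_sym n a) = space (Pi\<^sub>M {..<n} (\<lambda>_. borel))"
  by (simp add: dirichlet_sym_eq_distr_density)

lemma nn_integral_dirichlet_sym:
  assumes [measurable]: "f \<in> borel_measurable (Pi\<^sub>M {..<n} (\<lambda>_. borel))"
  shows "(\<integral>\<^sup>+x. f x \<partial>dirichlet_sym n a)
         = (\<integral>\<^sup>+x. ennreal (Gamma (real n * a) / Gamma a ^ n * simplex_kernel {..<n-1} 1 (\<lambda>_. a) a x)
               * f (simplex_embed n x) \<partial>Pi\<^sub>M {..<n-1} (\<lambda>_. lborel))"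
proof -
  have "simplex_embed n \<in> density (Pi\<^sub>M {..<n-1} (\<lambda>_. lborel)) D \<rightarrow>\<^sub>M Pi\<^sub>M {..<n} (\<lambda>_. borel)" for D
    unfolding measurable_density_eq1 by (rule measurable_simplex_embed)
  moreover have "(\<lambda>x. f (simplex_embed n x)) \<in> borel_measurable (Pi\<^sub>M {..<n-1} (\<lambda>_. lborel))"
    by measurable
  ultimately show ?thesis
    unfolding dirichlet_sym_eq_distr_density by (simp add: nn_integral_distr nn_integral_density)
qed

lemma AE_dirichlet_sym_pos: "AE x in dirichlet_sym n a. \<forall>i<n. 0 < x i"
proof -
  let ?D = "\<lambda>x. ennreal (Gamma (real n * a) / Gamma a ^ n * simplex_kernel {..<n-1} 1 (\<lambda>_. a) a x)"
  have "simplex_embed n \<in> density (Pi\<^sub>M {..<n-1} (\<lambda>_. lborel)) ?D \<rightarrow>\<^sub>M Pi\<^sub>M {..<n} (\<lambda>_. borel)"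
    unfolding measurable_density_eq1 by (rule measurable_simplex_embed)
  moreover have "AE x in density (Pi\<^sub>M {..<n-1} (\<lambda>_. lborel)) ?D. \<forall>i<n. 0 < simplex_embed n x i"
  proof (subst AE_density)
    show "?D \<in> borel_measurable (Pi\<^sub>M {..<n-1} (\<lambda>_. lborel))"
      by measurable
    have "x \<in> open_simplex {..<n-1} 1 \<Longrightarrow> i < n \<Longrightarrow> 0 < simplex_embed n x i" for x i
      by (auto simp: open_simplex_def simplex_embed_def)
    then show "AE x in Pi\<^sub>M {..<n-1} (\<lambda>_. lborel). 0 < ?D x \<longrightarrow> (\<forall>i<n. 0 < simplex_embed n x i)"
      by (intro AE_I2) (auto simp: simplex_kernel_def split: split_indicator)
  qed
  ultimately show ?thesis
    unfolding dirichlet_sym_eq_distr_density by (subst AE_distr_iff) auto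
qed

lemma AE_pos_if_distr_dirichlet_sym:
  assumes "W \<in> M \<rightarrow>\<^sub>M Pi\<^sub>M {..<n} (\<lambda>_. borel)"
    and "distr M (Pi\<^sub>M {..<n} (\<lambda>_. borel)) W = dirichlet_sym n a"
  shows "AE \<omega> in M. \<forall>i<n. 0 < W \<omega> i"
proof -
  have "AE x in distr M (Pi\<^sub>M {..<n} (\<lambda>_. borel)) W. \<forall>i<n. 0 < x i"
    unfolding assms(2) by (rule AE_dirichlet_sym_pos)
  then show ?thesis
    using assms(1) by (subst (asm) AE_distr_iff) auto
qed

lemma simplex_kernel_mult_monomial:
  assumes "finite A"
  shows "simplex_kernel A t a c x * ((\<Prod>i\<in>A. x i ^ k i) * (t - sum x A) ^ j)
         = simplex_kernel A t (\<lambda>i. a i + real (k i)) (c + real j) x"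
proof (cases "x \<in> open_simplex A t")
  case True
  have powr_pow: "z powr (e - 1) * z ^ m = z powr (e + real m - 1)" if "z > 0" for z e :: real and m
    using that by (simp add: powr_realpow[symmetric] powr_add[symmetric] algebra_simps)
  have "(\<Prod>i\<in>A. x i powr (a i - 1)) * (\<Prod>i\<in>A. x i ^ k i) = (\<Prod>i\<in>A. x i powr (a i + real (k i) - 1))"
    using True by (simp add: prod.distrib[symmetric] open_simplex_def powr_pow)
  moreover have "(t - sum x A) powr (c - 1) * (t - sum x A) ^ j = (t - sum x A) powr (c + real j - 1)"
    using True by (simp add: open_simplex_def powr_pow)
  ultimately show ?thesis
    using True unfolding simplex_kernel_def by (simp add: mult_ac)
qed (simp add: simplex_kernel_def)

lemma Gamma_plus_of_nat:
  fixes b :: real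
  assumes "b > 0"
  shows "Gamma (b + real k) = pochhammer b k * Gamma b"
proof -
  have "b \<notin> \<int>\<^sub>\<le>\<^sub>0"
    using assms by (auto dest: nonpos_Ints_nonpos)
  then show ?thesis
    using pochhammer_Gamma[of b k] Gamma_real_pos[OF assms] by simp
qed

lemma nn_integral_dirichlet_sym_monomial:
  assumes n: "n \<ge> 1" and b: "b > 0"
  shows "(\<integral>\<^sup>+x. ennreal (\<Prod>i<n. x i ^ k i) \<partial>dirichlet_sym n b)
         = ennreal ((\<Prod>i<n. pochhammer b (k i)) / pochhammer (real n * b) (\<Sum>i<n. k i))"
proof -
  obtain m where m: "n = Suc m"
    using n by (cases n) auto
  define K where "K = Gamma (real n * b) / Gamma b ^ n"
  have K: "K > 0"
    unfolding K_def using b n by (auto intro!: divide_pos_pos Gamma_real_pos)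
  have monomial: "(\<Prod>i<n. simplex_embed n x i ^ k i) = (\<Prod>i<m. x i ^ k i) * (1 - sum x {..<m}) ^ k m" for x
    by (simp add: m simplex_embed_def prod.lessThan_Suc)
  have "(\<integral>\<^sup>+x. ennreal (\<Prod>i<n. x i ^ k i) \<partial>dirichlet_sym n b)
        = (\<integral>\<^sup>+x. ennreal (K * simplex_kernel {..<m} 1 (\<lambda>_. b) b x)
             * ennreal (\<Prod>i<n. simplex_embed n x i ^ k i) \<partial>Pi\<^sub>M {..<m} (\<lambda>_. lborel))"
    unfolding K_def m by (subst nn_integral_dirichlet_sym) auto
  also have "\<dots> = (\<integral>\<^sup>+x. ennreal (K * simplex_kernel {..<m} 1 (\<lambda>i. b + real (k i)) (b + real (k m)) x)
                    \<partial>Pi\<^sub>M {..<m} (\<lambda>_. lborel))"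
  proof (rule nn_integral_cong)
    fix x :: "nat \<Rightarrow> real"
    have "simplex_kernel {..<m} 1 (\<lambda>_. b) b x * (\<Prod>i<n. simplex_embed n x i ^ k i)
          = simplex_kernel {..<m} 1 (\<lambda>i. b + real (k i)) (b + real (k m)) x"
      unfolding monomial simplex_kernel_mult_monomial[OF finite_lessThan] ..
    then show "ennreal (K * simplex_kernel {..<m} 1 (\<lambda>_. b) b x) * ennreal (\<Prod>i<n. simplex_embed n x i ^ k i)
               = ennreal (K * simplex_kernel {..<m} 1 (\<lambda>i. b + real (k i)) (b + real (k m)) x)"
      using K by (simp add: ennreal_mult'[symmetric] simplex_kernel_nonneg mult.assoc)
  qed
  also have "\<dots> = ennreal K * ennreal ((\<Prod>i<m. Gamma (b + real (k i))) * Gamma (b + real (k m))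
                                      / Gamma (real n * b + real (\<Sum>i<n. k i)))"
    using b K by (simp add: ennreal_mult nn_integral_cmult simplex_kernel_nonneg nn_integral_simplex_kernel)
         (simp add: m sum.distrib algebra_simps)
  also have "\<dots> = ennreal ((\<Prod>i<n. pochhammer b (k i)) / pochhammer (real n * b) (\<Sum>i<n. k i))"
  proof -
    have "(\<Prod>i<m. Gamma (b + real (k i))) * Gamma (b + real (k m)) = (\<Prod>i<n. pochhammer b (k i)) * Gamma b ^ n"
      using b by (simp add: m prod.lessThan_Suc Gamma_plus_of_nat prod.distrib)
    moreover have "Gamma (real n * b + real (\<Sum>i<n. k i)) = pochhammer (real n * b) (\<Sum>i<n. k i) * Gamma (real n * b)"
      using b n by (intro Gamma_plus_of_nat) auto
    moreover have "Gamma b > 0" "Gamma (real n * b) > 0" "pochhammer (real n * b) (\<Sum>i<n. k i) > 0"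
      using b n by (auto intro!: Gamma_real_pos pochhammer_pos)
    ultimately show ?thesis
      using K by (simp add: K_def ennreal_mult'[symmetric])
  qed
  finally show ?thesis .
qed

lemma prob_space_dirichlet_sym:
  assumes "n \<ge> 1" "a > 0"
  shows "prob_space (dirichlet_sym n a)"
proof
  have "emeasure (dirichlet_sym n a) (space (dirichlet_sym n a))
        = (\<integral>\<^sup>+x. ennreal (\<Prod>i<n. x i ^ (\<lambda>_. 0::nat) i) \<partial>dirichlet_sym n a)"
    by (simp add: nn_integral_const)
  also have "\<dots> = 1"
    using nn_integral_dirichlet_sym_monomial[OF assms, of "\<lambda>_. 0"] by simp
  finally show "emeasure (dirichlet_sym n a) (space (dirichlet_sym n a)) = 1" .
qed

section \<open>Moments of partial sums of Dirichlet weights\<close>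

lemma prod_increment_at:
  fixes f :: "'i \<Rightarrow> nat \<Rightarrow> 'a::comm_monoid_mult"
  assumes "finite I" "a \<in> I"
  shows "(\<Prod>i\<in>I. f i (k i + (if i = a then 1 else 0))) = f a (Suc (k a)) * (\<Prod>i\<in>I - {a}. f i (k i))"
proof -
  have "(\<Prod>i\<in>I - {a}. f i (k i + (if i = a then 1 else 0))) = (\<Prod>i\<in>I - {a}. f i (k i))"
    by (rule prod.cong) auto
  with assms show ?thesis
    by (simp add: prod.remove[of I a])
qed

lemma sum_prod_power_increment:
  fixes x :: "'i \<Rightarrow> 'a::comm_semiring_1"
  assumes "finite I" "A \<subseteq> I"
  shows "(\<Sum>a\<in>A. \<Prod>i\<in>I. x i ^ (k i + (if i = a then 1 else 0))) = (\<Sum>a\<in>A. x a) * (\<Prod>i\<in>I. x i ^ k i)"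
  unfolding sum_distrib_right
proof (rule sum.cong)
  fix a assume "a \<in> A"
  with assms show "(\<Prod>i\<in>I. x i ^ (k i + (if i = a then 1 else 0))) = x a * (\<Prod>i\<in>I. x i ^ k i)"
    using prod_increment_at[of I a "\<lambda>i m. x i ^ m"] prod.remove[of I a "\<lambda>i. x i ^ k i"] by (auto simp: mult_ac)
qed simp

lemma sum_prod_pochhammer_increment:
  fixes b :: "'a::comm_semiring_1"
  assumes "finite I" "A \<subseteq> I"
  shows "(\<Sum>a\<in>A. \<Prod>i\<in>I. pochhammer b (k i + (if i = a then 1 else 0)))
         = (of_nat (card A) * b + of_nat (\<Sum>i\<in>A. k i)) * (\<Prod>i\<in>I. pochhammer b (k i))"
proof -
  have "(\<Prod>i\<in>I. pochhammer b (k i + (if i = a then 1 else 0))) = (b + of_nat (k a)) * (\<Prod>i\<in>I. pochhammer b (k i))"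
    if "a \<in> A" for a
    using that assms prod_increment_at[of I a "\<lambda>i m. pochhammer b m"] prod.remove[of I a "\<lambda>i. pochhammer b (k i)"]
    by (auto simp: pochhammer_rec' mult_ac)
  then show ?thesis
    by (simp add: sum_distrib_right[symmetric] sum.distrib)
qed

text \<open>Multiplying by the partial sum raises one exponent of the monomial at a time, so induction
  on the power reduces everything to moments of monomials.\<close>
lemma nn_integral_dirichlet_sym_monomial_sum_power:
  assumes n: "n \<ge> 1" and b: "b > 0" and A: "A \<subseteq> {..<n}"
  shows "(\<integral>\<^sup>+x. ennreal ((\<Prod>i<n. x i ^ k i) * (\<Sum>i\<in>A. x i) ^ j) \<partial>dirichlet_sym n b)
       = ennreal ((\<Prod>i<n. pochhammer b (k i)) * pochhammer (real (card A) * b + real (\<Sum>i\<in>A. k i)) j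
                  / pochhammer (real n * b) ((\<Sum>i<n. k i) + j))"
proof (induction j arbitrary: k)
  case 0
  show ?case
    using nn_integral_dirichlet_sym_monomial[OF n b] by simp
next
  case (Suc j k)
  let ?k = "\<lambda>a i. k i + (if i = a then 1 else 0)"
  define c where "c = real (card A) * b + real (\<Sum>i\<in>A. k i)"
  define Q where "Q = pochhammer (c + 1) j / pochhammer (real n * b) ((\<Sum>i<n. k i) + Suc j)"
  have finA: "finite A"
    using A finite_subset by blast
  have c: "0 \<le> c"
    using b by (simp add: c_def sum_nonneg)
  then have Q: "0 \<le> Q"
    using b n by (auto simp: Q_def intro!: pochhammer_nonneg divide_nonneg_nonneg)
  have "(\<integral>\<^sup>+x. ennreal ((\<Prod>i<n. x i ^ k i) * (\<Sum>i\<in>A. x i) ^ Suc j) \<partial>dirichlet_sym n b)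
        = (\<integral>\<^sup>+x. (\<Sum>a\<in>A. ennreal ((\<Prod>i<n. x i ^ ?k a i) * (\<Sum>i\<in>A. x i) ^ j)) \<partial>dirichlet_sym n b)"
    using AE_dirichlet_sym_pos
  proof (rule nn_integral_cong_AE[OF AE_mp], intro AE_I2 impI)
    fix x :: "nat \<Rightarrow> real" assume "\<forall>i<n. 0 < x i"
    then have "0 \<le> (\<Prod>i<n. x i ^ ?k a i) * (\<Sum>i\<in>A. x i) ^ j" for a
      using A by (intro mult_nonneg_nonneg prod_nonneg zero_le_power sum_nonneg) (auto intro: less_imp_le)
    moreover have "(\<Prod>i<n. x i ^ k i) * (\<Sum>i\<in>A. x i) ^ Suc j = (\<Sum>a\<in>A. \<Prod>i<n. x i ^ ?k a i) * (\<Sum>i\<in>A. x i) ^ j"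
      using A by (subst sum_prod_power_increment) (simp_all add: mult_ac)
    ultimately show "ennreal ((\<Prod>i<n. x i ^ k i) * (\<Sum>i\<in>A. x i) ^ Suc j)
                     = (\<Sum>a\<in>A. ennreal ((\<Prod>i<n. x i ^ ?k a i) * (\<Sum>i\<in>A. x i) ^ j))"
      by (simp add: sum_ennreal sum_distrib_right)
  qed
  also have "\<dots> = (\<Sum>a\<in>A. \<integral>\<^sup>+x. ennreal ((\<Prod>i<n. x i ^ ?k a i) * (\<Sum>i\<in>A. x i) ^ j) \<partial>dirichlet_sym n b)"
    using A by (intro nn_integral_sum) (measurable, auto)
  also have "\<dots> = (\<Sum>a\<in>A. ennreal ((\<Prod>i<n. pochhammer b (?k a i)) * Q))"
    using A finA by (intro sum.cong refl) (auto simp: Suc.IH Q_def c_def sum.distrib add_ac)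
  also have "\<dots> = ennreal (c * (\<Prod>i<n. pochhammer b (k i)) * Q)"
    using A b c Q by (simp add: sum_ennreal sum_distrib_right[symmetric] sum_prod_pochhammer_increment c_def
                                 prod_nonneg pochhammer_nonneg)
  also have "c * (\<Prod>i<n. pochhammer b (k i)) * Q
             = (\<Prod>i<n. pochhammer b (k i)) * pochhammer c (Suc j) / pochhammer (real n * b) ((\<Sum>i<n. k i) + Suc j)"
    by (simp add: Q_def pochhammer_rec)
  finally show ?case
    by (simp add: c_def)
qed

text \<open>The ratios \<open>pochhammer a j / pochhammer s j\<close> are the moments of a Beta(\<open>a\<close>, \<open>s - a\<close>)
  variable, so the left-hand side is its fourth central moment.\<close>
lemma pochhammer_central_moment4:
  fixes a s :: real
  assumes "s > 0"
  shows "pochhammer a 4 / pochhammer s 4 - 4 * (a/s) * (pochhammer a 3 / pochhammer s 3)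
           + 6 * (a/s)^2 * (pochhammer a 2 / pochhammer s 2) - 3 * (a/s)^4
         = 3 * a * (s - a) * (a * (s - a) * (s - 6) + 2 * s^2) / (s^4 * (s + 1) * (s + 2) * (s + 3))"
proof -
  have p: "pochhammer x 2 = x * (x + 1)" "pochhammer x 3 = x * (x + 1) * (x + 2)"
       "pochhammer x 4 = x * (x + 1) * (x + 2) * (x + 3)" for x :: real
    by (simp_all add: pochhammer_Suc eval_nat_numeral algebra_simps)
  define u v w where "u = s + 1" and "v = s + 2" and "w = s + 3"
  have nz: "s \<noteq> 0" "u \<noteq> 0" "v \<noteq> 0" "w \<noteq> 0"
    using assms by (auto simp: u_def v_def w_def)
  have "pochhammer a 4 / pochhammer s 4 - 4 * (a/s) * (pochhammer a 3 / pochhammer s 3)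
          + 6 * (a/s)^2 * (pochhammer a 2 / pochhammer s 2) - 3 * (a/s)^4
        = a * (a+1) * (a+2) * (a+3) / (s * u * v * w) - 4 * (a/s) * (a * (a+1) * (a+2) / (s * u * v))
          + 6 * (a/s)^2 * (a * (a+1) / (s * u)) - 3 * (a/s)^4"
    unfolding p u_def v_def w_def by (simp add: add_ac)
  also have "\<dots> = (a * (a+1) * (a+2) * (a+3) * s^3 - 4 * a * (a * (a+1) * (a+2)) * s^2 * w
                   + 6 * a^2 * (a * (a+1)) * s * v * w - 3 * a^4 * u * v * w) / (s^4 * u * v * w)"
    using nz by (simp add: field_simps) algebra
  also have "a * (a+1) * (a+2) * (a+3) * s^3 - 4 * a * (a * (a+1) * (a+2)) * s^2 * w
               + 6 * a^2 * (a * (a+1)) * s * v * w - 3 * a^4 * u * v * w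
             = 3 * a * (s - a) * (a * (s - a) * (s - 6) + 2 * s^2)"
    unfolding u_def v_def w_def by algebra
  finally show ?thesis
    by (simp add: u_def v_def w_def mult_ac)
qed

lemma central_moment4_le:
  fixes a s :: real
  assumes s: "s > 0" and a: "0 \<le> a" "a \<le> s"
  shows "3 * a * (s - a) * (a * (s - a) * (s - 6) + 2 * s^2) / (s^4 * (s + 1) * (s + 2) * (s + 3)) \<le> 2 / s^2"
proof -
  define q where "q = a * (s - a)"
  have q: "0 \<le> q" "q \<le> s^2 / 4"
    unfolding q_def using a sum_squares_ge_zero[of "s - 2 * a" 0]
    by (simp, simp add: power2_eq_square algebra_simps)
  have "q * (q * (s - 6) + 2 * s^2) \<le> q * (q * s + 2 * s^2)"
    by (rule mult_left_mono) (use q in \<open>auto intro: mult_left_mono\<close>)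
  also have "\<dots> \<le> (s^2 / 4) * ((s^2 / 4) * s + 2 * s^2)"
    using q s by (intro mult_mono add_right_mono mult_right_mono) auto
  finally have "3 * (q * (q * (s - 6) + 2 * s^2)) * s^2 \<le> 3 * ((s^2 / 4) * ((s^2 / 4) * s + 2 * s^2)) * s^2"
    by (intro mult_right_mono) auto
  also have "\<dots> \<le> 2 * (s^4 * (s + 1) * (s + 2) * (s + 3))"
  proof -
    have "(s + 1) * (s + 2) * (s + 3) = s^3 + 6 * s^2 + 11 * s + 6"
      by (simp add: power2_eq_square power3_eq_cube algebra_simps)
    moreover have "3 / 16 * s^3 \<le> 2 * s^3" "3 / 2 * s^2 \<le> 12 * s^2"
      using s by auto
    ultimately have "3 / 16 * s^3 + 3 / 2 * s^2 \<le> 2 * ((s + 1) * (s + 2) * (s + 3))"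
      using s by linarith
    then have "s^4 * (3 / 16 * s^3 + 3 / 2 * s^2) \<le> s^4 * (2 * ((s + 1) * (s + 2) * (s + 3)))"
      by (intro mult_left_mono) auto
    then show ?thesis
      by (simp add: power2_eq_square power3_eq_cube power4_eq_xxxx algebra_simps)
  qed
  finally have "3 * (q * (q * (s - 6) + 2 * s^2)) * s^2 \<le> 2 * (s^4 * (s + 1) * (s + 2) * (s + 3))" .
  then have "3 * a * (s - a) * (a * (s - a) * (s - 6) + 2 * s^2) \<le> 2 / s^2 * (s^4 * (s + 1) * (s + 2) * (s + 3))"
    using s by (simp add: q_def field_simps)
  moreover have "0 < s^4 * (s + 1) * (s + 2) * (s + 3)"
    using s by simp
  ultimately show ?thesis
    by (simp add: pos_divide_le_eq)
qed

lemma
  assumes n: "n \<ge> 1" and b: "b > 0" and A: "A \<subseteq> {..<n}"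
  shows integrable_dirichlet_sym_sum_power: "integrable (dirichlet_sym n b) (\<lambda>x. (\<Sum>i\<in>A. x i) ^ j)"
    and integral_dirichlet_sym_sum_power:
      "(\<integral>x. (\<Sum>i\<in>A. x i) ^ j \<partial>dirichlet_sym n b) = pochhammer (real (card A) * b) j / pochhammer (real n * b) j"
proof -
  have nonneg: "AE x in dirichlet_sym n b. 0 \<le> (\<Sum>i\<in>A. x i) ^ j"
    using AE_dirichlet_sym_pos
  proof eventually_elim
    case (elim x)
    then show ?case
      using A by (intro zero_le_power sum_nonneg) (auto intro: less_imp_le)
  qed
  have nn: "(\<integral>\<^sup>+x. ennreal ((\<Sum>i\<in>A. x i) ^ j) \<partial>dirichlet_sym n b)
            = ennreal (pochhammer (real (card A) * b) j / pochhammer (real n * b) j)"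
    using nn_integral_dirichlet_sym_monomial_sum_power[OF n b A, of "\<lambda>_. 0" j] by simp
  have [measurable]: "(\<lambda>x. (\<Sum>i\<in>A. x i) ^ j) \<in> borel_measurable (dirichlet_sym n b)"
    using A by (measurable, auto)
  show int: "integrable (dirichlet_sym n b) (\<lambda>x. (\<Sum>i\<in>A. x i) ^ j)"
    using nonneg by (intro integrableI_nonneg) (auto simp: nn)
  have "0 \<le> pochhammer (real (card A) * b) j / pochhammer (real n * b) j"
    using b by (auto simp: pochhammer_prod intro!: divide_nonneg_nonneg prod_nonneg)
  then show "(\<integral>x. (\<Sum>i\<in>A. x i) ^ j \<partial>dirichlet_sym n b) = pochhammer (real (card A) * b) j / pochhammer (real n * b) j"
    using nonneg by (simp add: integral_eq_nn_integral nn)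
qed

lemma
  assumes n: "n \<ge> 1" and b: "b > 0" and A: "A \<subseteq> {..<n}"
  shows integrable_dirichlet_sym_sum_central_moment4:
      "integrable (dirichlet_sym n b) (\<lambda>x. ((\<Sum>i\<in>A. x i) - real (card A) / real n) ^ 4)"
    and integral_dirichlet_sym_sum_central_moment4_le:
      "(\<integral>x. ((\<Sum>i\<in>A. x i) - real (card A) / real n) ^ 4 \<partial>dirichlet_sym n b) \<le> 2 / (real n * b)^2"
proof -
  interpret prob_space "dirichlet_sym n b"
    using prob_space_dirichlet_sym[OF n b] .
  define S where "S x = (\<Sum>i\<in>A. x i)" for x :: "nat \<Rightarrow> real"
  define a where "a = real (card A) * b"
  define s where "s = real n * b"
  define p where "p = a / s"
  define m where "m j = pochhammer a j / pochhammer s j" for j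
  have s: "s > 0"
    using n b by (simp add: s_def)
  have a: "0 \<le> a" "a \<le> s"
    using b card_mono[OF _ A] by (auto simp: a_def s_def)
  have p: "p = real (card A) / real n"
    using b by (simp add: p_def a_def s_def)
  have moment_int: "integrable (dirichlet_sym n b) (\<lambda>x. S x ^ j)"
    and moment: "(\<integral>x. S x ^ j \<partial>dirichlet_sym n b) = m j" for j
    unfolding S_def m_def a_def s_def
    by (rule integrable_dirichlet_sym_sum_power[OF n b A], rule integral_dirichlet_sym_sum_power[OF n b A])
  have expand: "(S x - p)^4 = S x ^ 4 - 4 * p * S x ^ 3 + 6 * p^2 * S x ^ 2 - 4 * p^3 * S x ^ 1 + p^4" for x
    by (simp add: power2_eq_square power3_eq_cube power4_eq_xxxx algebra_simps)
  show "integrable (dirichlet_sym n b) (\<lambda>x. ((\<Sum>i\<in>A. x i) - real (card A) / real n) ^ 4)"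
    unfolding S_def[symmetric] p[symmetric] expand using moment_int moment_int[of 1]
    by (simp add: integrable_diff integrable_add integrable_mult_right)
  have "(\<integral>x. (S x - p)^4 \<partial>dirichlet_sym n b) = m 4 - 4 * p * m 3 + 6 * p^2 * m 2 - 4 * p^3 * m 1 + p^4"
    unfolding expand using moment_int moment_int[of 1]
    by (simp add: moment[symmetric] integrable_diff integrable_add integrable_mult_right prob_space)
  also have "\<dots> = pochhammer a 4 / pochhammer s 4 - 4 * p * (pochhammer a 3 / pochhammer s 3)
                     + 6 * p^2 * (pochhammer a 2 / pochhammer s 2) - 3 * p^4"
    by (simp add: m_def p_def eval_nat_numeral algebra_simps)
  also have "\<dots> = 3 * a * (s - a) * (a * (s - a) * (s - 6) + 2 * s^2) / (s^4 * (s + 1) * (s + 2) * (s + 3))"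
    unfolding p_def by (rule pochhammer_central_moment4[OF s])
  also have "\<dots> \<le> 2 / s^2"
    by (rule central_moment4_le[OF s a])
  finally show "(\<integral>x. ((\<Sum>i\<in>A. x i) - real (card A) / real n) ^ 4 \<partial>dirichlet_sym n b) \<le> 2 / (real n * b)^2"
    by (simp add: S_def p s_def)
qed

lemma measure_dirichlet_sym_sum_deviation:
  assumes n: "n \<ge> 1" and b: "b > 0" and A: "A \<subseteq> {..<n}" and \<delta>: "\<delta> > 0"
  shows "measure (dirichlet_sym n b)
           {x \<in> space (dirichlet_sym n b). \<delta> < \<bar>real (card A) / real n - (\<Sum>i\<in>A. x i)\<bar>}
         \<le> 2 / (\<delta>^4 * (real n * b)^2)"
proof -
  let ?D = "dirichlet_sym n b" and ?c = "\<lambda>x. (\<Sum>i\<in>A. x i) - real (card A) / real n"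
  interpret prob_space ?D
    using prob_space_dirichlet_sym[OF n b] .
  have "{x \<in> space ?D. \<delta> < \<bar>real (card A) / real n - (\<Sum>i\<in>A. x i)\<bar>} \<subseteq> {x \<in> space ?D. \<delta>^4 \<le> ?c x ^ 4}"
  proof safe
    fix x assume "\<delta> < \<bar>real (card A) / real n - (\<Sum>i\<in>A. x i)\<bar>"
    then have "\<delta>^4 \<le> \<bar>?c x\<bar>^4"
      using \<delta> by (intro power_mono) auto
    then show "\<delta>^4 \<le> ?c x ^ 4"
      by (simp add: power_even_abs_numeral)
  qed
  then have "measure ?D {x \<in> space ?D. \<delta> < \<bar>real (card A) / real n - (\<Sum>i\<in>A. x i)\<bar>}
             \<le> measure ?D {x \<in> space ?D. \<delta>^4 \<le> ?c x ^ 4}"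
    using A by (intro finite_measure_mono) (measurable, auto)
  also have "\<dots> \<le> (\<integral>x. ?c x ^ 4 \<partial>?D) / \<delta>^4"
    using integrable_dirichlet_sym_sum_central_moment4[OF n b A] \<delta>
    by (intro integral_Markov_inequality_measure[where A = "space ?D"]) auto
  also have "\<dots> \<le> 2 / (real n * b)^2 / \<delta>^4"
    using integral_dirichlet_sym_sum_central_moment4_le[OF n b A] \<delta> by (intro divide_right_mono) auto
  finally show ?thesis
    by (simp add: mult_ac)
qed

section \<open>Lower sets and the Kolmogorov distance\<close>

definition lower_set :: "nat \<Rightarrow> (nat \<Rightarrow> real) \<Rightarrow> nat set \<Rightarrow> bool" where
  "lower_set n l A \<longleftrightarrow> A \<subseteq> {..<n} \<and> (\<forall>i\<in>A. \<forall>j\<in>{..<n} - A. l i < l j)"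

lemma lower_set_subset:
  assumes B: "lower_set n l B" and A: "lower_set n l A" and card: "card B \<le> card A"
  shows "B \<subseteq> A"
proof (rule ccontr)
  assume "\<not> B \<subseteq> A"
  then obtain i where i: "i \<in> B" "i \<notin> A"
    by auto
  have "finite B"
    using B finite_subset unfolding lower_set_def by blast
  then have "\<not> A \<subseteq> B"
    using i card psubset_card_mono[of B A] by auto
  then obtain j where j: "j \<in> A" "j \<notin> B"
    by auto
  have "l i < l j" and "l j < l i"
    using A B i j unfolding lower_set_def by auto
  then show False
    by simp
qed

lemma lower_set_exists:
  assumes inj: "inj_on l {..<n}" and "k \<le> n"
  shows "\<exists>A. lower_set n l A \<and> card A = k"
  using \<open>k \<le> n\<close>
proof (induction k)
  case 0
  show ?case
    by (rule exI[of _ "{}"]) (simp add: lower_set_def)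
next
  case (Suc k)
  then obtain A where A: "lower_set n l A" "card A = k"
    by auto
  define X where "X = {..<n} - A"
  have AS: "A \<subseteq> {..<n}"
    using A unfolding lower_set_def by auto
  have "X \<noteq> {}"
    using Suc.prems A card_mono[OF finite_lessThan AS] AS unfolding X_def by (auto simp: subset_antisym)
  then obtain j where j: "j \<in> X" "\<And>y. y \<in> X \<Longrightarrow> l j \<le> l y"
    using ex_is_arg_min_if_finite[of X l] unfolding X_def by (auto simp: is_arg_min_linorder)
  have "lower_set n l (insert j A)"
    unfolding lower_set_def
  proof (intro conjI ballI)
    show "insert j A \<subseteq> {..<n}"
      using AS j(1) unfolding X_def by auto
  next
    fix i i' assume i: "i \<in> insert j A" and i': "i' \<in> {..<n} - insert j A"
    show "l i < l i'"
    proof (cases "i \<in> A")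
      case True
      then show ?thesis
        using A i' unfolding lower_set_def by auto
    next
      case False
      then have "i = j" "i' \<in> X"
        using i i' unfolding X_def by auto
      moreover have "l j \<noteq> l i'"
        using inj j(1) i' inj_onD[of l "{..<n}" j i'] unfolding X_def by auto
      ultimately show ?thesis
        using j(2) by force
    qed
  qed
  moreover have "card (insert j A) = Suc k"
    using A j(1) AS unfolding X_def by (simp add: finite_subset)
  ultimately show ?case
    by blast
qed

lemma atomic_cdf_eq_sum: "atomic_cdf n l w x = sum w {i\<in>{..<n}. l i \<le> x}"
  unfolding atomic_cdf_def by (rule sum.inter_filter[symmetric]) simp

lemma atomic_cdf_cong:
  "(\<And>i. i < n \<Longrightarrow> l i = l' i) \<Longrightarrow> (\<And>i. i < n \<Longrightarrow> w i = w' i) \<Longrightarrow> atomic_cdf n l w = atomic_cdf n l' w'"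
  unfolding atomic_cdf_def by (intro ext sum.cong) auto

lemma kolmogorov_dist_atomic_nonneg: "0 \<le> kolmogorov_dist (atomic_cdf n l u) (atomic_cdf n l v)"
proof -
  have "\<bar>atomic_cdf n l u x - atomic_cdf n l v x\<bar> \<le> (\<Sum>i<n. \<bar>u i\<bar>) + (\<Sum>i<n. \<bar>v i\<bar>)" for x
    unfolding atomic_cdf_def
    by (rule order_trans[OF abs_triangle_ineq4 add_mono]; rule order_trans[OF sum_abs sum_mono]) auto
  then have "bdd_above (range (\<lambda>x. \<bar>atomic_cdf n l u x - atomic_cdf n l v x\<bar>))"
    by (intro bdd_aboveI2)
  then show ?thesis
    unfolding kolmogorov_dist_def by (rule cSUP_upper2[OF _ UNIV_I]) simp
qed

lemma abs_deviation_le_sandwich: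
  fixes v :: "nat \<Rightarrow> real"
  assumes sub: "B \<subseteq> A" "A \<subseteq> B'" "B' \<subseteq> {..<n}" and v: "\<And>i. i < n \<Longrightarrow> 0 \<le> v i"
    and dev: "\<bar>real (card B) / real n - sum v B\<bar> \<le> \<delta>" "\<bar>real (card B') / real n - sum v B'\<bar> \<le> \<delta>"
  shows "\<bar>real (card A) / real n - sum v A\<bar> \<le> \<delta> + (real (card B') - real (card B)) / real n"
proof -
  have fin: "finite B'" "finite A"
    using sub by (meson finite_lessThan finite_subset)+
  have "sum v B \<le> sum v A" "sum v A \<le> sum v B'"
    using sub v fin by (auto intro!: sum_mono2 intro: finite_subset)
  moreover have "real (card B) / real n \<le> real (card A) / real n" "real (card A) / real n \<le> real (card B') / real n"
    using sub fin by (auto intro!: divide_right_mono card_mono intro: finite_subset)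
  ultimately show ?thesis
    using dev by (simp add: diff_divide_distrib abs_le_iff)
qed

lemma grid_bracket:
  fixes k n N :: nat
  assumes N: "N > 0" and n: "n > 0" and k: "k \<le> n"
  obtains j where "j < N" "j * n div N \<le> k" "k \<le> (j + 1) * n div N"
    and "real ((j + 1) * n div N) - real (j * n div N) \<le> real n / real N + 1"
proof -
  define j where "j = (if k = n then N - 1 else k * N div n)"
  have "j < N"
    using N n k by (auto simp: j_def div_less_iff_less_mult)
  moreover have "j * n div N \<le> k"
  proof -
    have "j * n \<le> k * N"
      using k div_times_less_eq_dividend[of "k * N" n] by (auto simp: j_def mult_ac intro: mult_mono)
    then show ?thesis
      using N by (metis div_le_mono nonzero_mult_div_cancel_right not_gr0)
  qed
  moreover have "k \<le> (j + 1) * n div N"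
  proof (cases "k = n")
    case False
    then have "k * N < (j + 1) * n"
      using n dividend_less_div_times[of n "k * N"] by (simp add: j_def)
    then show ?thesis
      using N by (metis div_le_mono less_imp_le nonzero_mult_div_cancel_right not_gr0)
  qed (use N in \<open>simp add: j_def\<close>)
  moreover have "real ((j + 1) * n div N) - real (j * n div N) \<le> real n / real N + 1"
  proof -
    have "real ((j + 1) * n div N) \<le> real ((j + 1) * n) / real N"
      by (rule of_nat_div_le_of_nat)
    moreover have "real (j * n) / real N - 1 \<le> real (j * n div N)"
      using of_nat_of_nat_div_aux[of "j * n" N, where 'a = real] N
      by (simp add: field_simps)
    ultimately show ?thesis
      using N by (simp add: field_simps)
  qed
  ultimately show ?thesis
    using that by blast
qed

text \<open>At every point the difference of the two distribution functions is the deviation over a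
  lower set, which lies between two consecutive grid lower sets.\<close>
lemma kolmogorov_dist_atomic_le:
  fixes l v :: "nat \<Rightarrow> real"
  assumes inj: "inj_on l {..<n}" and v: "\<And>i. i < n \<Longrightarrow> 0 \<le> v i" and N: "N > 0" and n: "n > 0"
    and grid: "\<And>A j. lower_set n l A \<Longrightarrow> j \<le> N \<Longrightarrow> card A = j * n div N \<Longrightarrow>
                  \<bar>real (card A) / real n - sum v A\<bar> \<le> \<delta>"
  shows "kolmogorov_dist (atomic_cdf n l (\<lambda>_. 1 / real n)) (atomic_cdf n l v) \<le> \<delta> + 1 / real N + 1 / real n"
  unfolding kolmogorov_dist_def
proof (rule cSUP_least)
  fix x
  define A where "A = {i\<in>{..<n}. l i \<le> x}"
  have A: "lower_set n l A" "card A \<le> n"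
    unfolding lower_set_def A_def by (auto intro: card_mono[of "{..<n}", simplified])
  obtain j where j: "j < N" "j * n div N \<le> card A" "card A \<le> (j + 1) * n div N"
    and gap: "real ((j + 1) * n div N) - real (j * n div N) \<le> real n / real N + 1"
    using grid_bracket[OF N n A(2)] .
  have "(j + 1) * n div N \<le> n"
    using j(1) N by (metis Suc_eq_plus1 Suc_leI div_le_mono mult_le_mono1 nonzero_mult_div_cancel_left not_gr0)
  then obtain B B' where B: "lower_set n l B" "card B = j * n div N"
    and B': "lower_set n l B'" "card B' = (j + 1) * n div N"
    using lower_set_exists[OF inj] j by (meson le_trans)
  have "B \<subseteq> A" "A \<subseteq> B'"
    using B B' A j by (simp_all add: lower_set_subset)
  moreover have "B' \<subseteq> {..<n}"
    using B' by (simp add: lower_set_def)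
  ultimately have "\<bar>real (card A) / real n - sum v A\<bar> \<le> \<delta> + (real (card B') - real (card B)) / real n"
    using B B' j v grid[OF B(1), of j] grid[OF B'(1), of "j + 1"] by (intro abs_deviation_le_sandwich) auto
  also have "\<dots> \<le> \<delta> + (real n / real N + 1) / real n"
    using gap B(2) B'(2) by (simp add: divide_right_mono)
  also have "\<dots> = \<delta> + 1 / real N + 1 / real n"
    using n by (simp add: field_simps)
  finally show "\<bar>atomic_cdf n l (\<lambda>_. 1 / real n) x - atomic_cdf n l v x\<bar> \<le> \<delta> + 1 / real N + 1 / real n"
    by (simp add: atomic_cdf_eq_sum A_def)
qed simp

section \<open>Almost sure convergence\<close>

lemma pred_lower_set[measurable]:
  "Measurable.pred (Pi\<^sub>M {..<n} (\<lambda>_. borel :: real measure)) (\<lambda>x. lower_set n x A)"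
proof (cases "A \<subseteq> {..<n}")
  case True
  have "{x \<in> space (Pi\<^sub>M {..<n} (\<lambda>_. borel)). \<forall>i\<in>A. \<forall>j\<in>{..<n} - A. x i < x j}
        \<in> sets (Pi\<^sub>M {..<n} (\<lambda>_. borel :: real measure))"
  proof (rule sets.sets_Collect_finite_All)
    fix i assume "i \<in> A"
    show "{x \<in> space (Pi\<^sub>M {..<n} (\<lambda>_. borel)). \<forall>j\<in>{..<n} - A. x i < x j}
          \<in> sets (Pi\<^sub>M {..<n} (\<lambda>_. borel :: real measure))"
    proof (rule sets.sets_Collect_finite_All)
      fix j assume "j \<in> {..<n} - A"
      with \<open>i \<in> A\<close> True have [measurable]: "i \<in> {..<n}" "j \<in> {..<n}"
        by auto
      show "{x \<in> space (Pi\<^sub>M {..<n} (\<lambda>_. borel)). x i < x j} \<in> sets (Pi\<^sub>M {..<n} (\<lambda>_. borel :: real measure))"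
        by measurable
    qed simp
  qed (use True finite_subset in blast)
  with True show ?thesis
    by (simp add: lower_set_def pred_def)
qed (simp add: lower_set_def pred_def)

definition grid_deviation_set ::
  "'a measure \<Rightarrow> ('a \<Rightarrow> nat \<Rightarrow> real) \<Rightarrow> ('a \<Rightarrow> nat \<Rightarrow> real) \<Rightarrow> nat \<Rightarrow> nat \<Rightarrow> real \<Rightarrow> 'a set" where
  "grid_deviation_set M L W n N \<delta> =
     {\<omega> \<in> space M. \<exists>A. lower_set n (L \<omega>) A \<and> (\<exists>j\<le>N. card A = j * n div N)
                         \<and> \<delta> < \<bar>real (card A) / real n - sum (W \<omega>) A\<bar>}"

lemma grid_deviation_set_eq_Union:
  "grid_deviation_set M L W n N \<delta> =
     (\<Union>A\<in>{A. A \<subseteq> {..<n} \<and> (\<exists>j\<le>N. card A = j * n div N)}.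
        {\<omega> \<in> space M. lower_set n (L \<omega>) A} \<inter> {\<omega> \<in> space M. \<delta> < \<bar>real (card A) / real n - sum (W \<omega>) A\<bar>})"
  by (auto simp: grid_deviation_set_def lower_set_def)

lemma sets_grid_deviation_set:
  assumes [measurable]: "L \<in> M \<rightarrow>\<^sub>M Pi\<^sub>M {..<n} (\<lambda>_. borel)" "W \<in> M \<rightarrow>\<^sub>M Pi\<^sub>M {..<n} (\<lambda>_. borel)"
  shows "grid_deviation_set M L W n N \<delta> \<in> sets M"
proof -
  have "{\<omega> \<in> space M. lower_set n (L \<omega>) A} \<in> sets M" for A
    by measurable
  moreover have "{\<omega> \<in> space M. \<delta> < \<bar>real (card A) / real n - sum (W \<omega>) A\<bar>} \<in> sets M" if "A \<subseteq> {..<n}" for A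
    using that by (measurable, auto)
  ultimately show ?thesis
    unfolding grid_deviation_set_eq_Union by (intro sets.finite_UN) auto
qed

lemma sum_measure_grid_lower_set_le:
  assumes "prob_space M" and [measurable]: "L \<in> M \<rightarrow>\<^sub>M Pi\<^sub>M {..<n} (\<lambda>_. borel)"
  shows "(\<Sum>A | A \<subseteq> {..<n} \<and> (\<exists>j\<le>N. card A = j * n div N). measure M {\<omega> \<in> space M. lower_set n (L \<omega>) A})
         \<le> real (N + 1)"
proof -
  interpret prob_space M
    by fact
  let ?E = "\<lambda>A. {\<omega> \<in> space M. lower_set n (L \<omega>) A}"
  let ?G = "(\<lambda>j. j * n div N) ` {..N}"
  have same_card: "(\<Sum>A | A \<subseteq> {..<n} \<and> card A = k. measure M (?E A)) \<le> 1" for k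
  proof -
    have "disjoint_family_on ?E {A. A \<subseteq> {..<n} \<and> card A = k}"
      unfolding disjoint_family_on_def by (auto dest: lower_set_subset)
    then have "(\<Sum>A | A \<subseteq> {..<n} \<and> card A = k. measure M (?E A)) = prob (\<Union>A\<in>{A. A \<subseteq> {..<n} \<and> card A = k}. ?E A)"
      by (intro finite_measure_finite_Union[symmetric]) auto
    then show ?thesis
      using prob_le_1 by simp
  qed
  let ?\<A> = "{A. A \<subseteq> {..<n} \<and> (\<exists>j\<le>N. card A = j * n div N)}"
  have "finite ?\<A>"
    by (rule finite_subset[of _ "Pow {..<n}"]) auto
  then have "(\<Sum>A\<in>?\<A>. measure M (?E A)) = (\<Sum>k\<in>?G. \<Sum>A\<in>{A \<in> ?\<A>. card A = k}. measure M (?E A))"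
    by (rule sum.group[symmetric]) auto
  also have "\<dots> = (\<Sum>k\<in>?G. \<Sum>A | A \<subseteq> {..<n} \<and> card A = k. measure M (?E A))"
    by (intro sum.cong refl arg_cong2[where f = sum]) auto
  also have "\<dots> \<le> real (card ?G)"
    using sum_mono[of ?G _ "\<lambda>_. 1", OF same_card] by simp
  also have "\<dots> \<le> real (N + 1)"
    using card_image_le[of "{..N}" "\<lambda>j. j * n div N"] by simp
  finally show ?thesis .
qed

lemma measure_grid_deviation_set_le:
  fixes L W :: "'a \<Rightarrow> nat \<Rightarrow> real"
  assumes "prob_space M" and n: "n \<ge> 1" and b: "b > 0" and \<delta>: "\<delta> > 0"
    and [measurable]: "L \<in> M \<rightarrow>\<^sub>M Pi\<^sub>M {..<n} (\<lambda>_. borel)" "W \<in> M \<rightarrow>\<^sub>M Pi\<^sub>M {..<n} (\<lambda>_. borel)"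
    and indep: "prob_space.indep_var M (Pi\<^sub>M {..<n} (\<lambda>_. borel)) L (Pi\<^sub>M {..<n} (\<lambda>_. borel)) W"
    and dir: "distr M (Pi\<^sub>M {..<n} (\<lambda>_. borel)) W = dirichlet_sym n b"
  shows "measure M (grid_deviation_set M L W n N \<delta>) \<le> real (N + 1) * (2 / (\<delta>^4 * (real n * b)^2))"
proof -
  interpret prob_space M
    by fact
  let ?P = "Pi\<^sub>M {..<n} (\<lambda>_. borel :: real measure)"
  let ?\<A> = "{A. A \<subseteq> {..<n} \<and> (\<exists>j\<le>N. card A = j * n div N)}"
  define E where "E A = {x \<in> space ?P. lower_set n x A}" for A
  define F where "F A = {x \<in> space ?P. \<delta> < \<bar>real (card A) / real n - sum x A\<bar>}" for A
  define q where "q = 2 / (\<delta>^4 * (real n * b)^2)"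
  have [measurable]: "E A \<in> sets ?P" "F A \<in> sets ?P" if "A \<subseteq> {..<n}" for A
    using that unfolding E_def F_def by (measurable, auto)
  have E: "L -` E A \<inter> space M = {\<omega> \<in> space M. lower_set n (L \<omega>) A}" for A
    using measurable_space[OF assms(5)] by (auto simp: E_def)
  have F: "prob (W -` F A \<inter> space M) \<le> q" if "A \<in> ?\<A>" for A
  proof -
    have "prob (W -` F A \<inter> space M) = measure (dirichlet_sym n b) (F A)"
      using that by (simp add: measure_distr[OF assms(6)] flip: dir)
    then show ?thesis
      using measure_dirichlet_sym_sum_deviation[OF n b _ \<delta>] that by (simp add: F_def q_def space_dirichlet_sym)
  qed
  have grid_eq: "grid_deviation_set M L W n N \<delta> = (\<Union>A\<in>?\<A>. L -` E A \<inter> W -` F A \<inter> space M)"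
    unfolding grid_deviation_set_eq_Union
    using measurable_space[OF assms(5)] measurable_space[OF assms(6)] by (auto simp: E_def F_def)
  have events: "L -` E A \<inter> W -` F A \<inter> space M \<in> events" if "A \<in> ?\<A>" for A
  proof -
    have "(L -` E A \<inter> space M) \<inter> (W -` F A \<inter> space M) \<in> events"
      using that by (intro sets.Int measurable_sets[OF assms(5)] measurable_sets[OF assms(6)]) auto
    moreover have "(L -` E A \<inter> space M) \<inter> (W -` F A \<inter> space M) = L -` E A \<inter> W -` F A \<inter> space M"
      by auto
    ultimately show ?thesis
      by simp
  qed
  have "finite ?\<A>"
    by (rule finite_subset[of _ "Pow {..<n}"]) auto
  then have "measure M (grid_deviation_set M L W n N \<delta>) \<le> (\<Sum>A\<in>?\<A>. measure M (L -` E A \<inter> W -` F A \<inter> space M))"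
    unfolding grid_eq using events by (intro measure_UNION_le) auto
  also have "\<dots> = (\<Sum>A\<in>?\<A>. prob (L -` E A \<inter> space M) * prob (W -` F A \<inter> space M))"
    using indep_varD[OF indep] by (intro sum.cong refl) (auto simp: vimage_def Int_def conj_ac)
  also have "\<dots> \<le> (\<Sum>A\<in>?\<A>. measure M {\<omega> \<in> space M. lower_set n (L \<omega>) A} * q)"
    using F by (intro sum_mono) (simp add: E mult_left_mono)
  also have "\<dots> = q * (\<Sum>A\<in>?\<A>. measure M {\<omega> \<in> space M. lower_set n (L \<omega>) A})"
    by (simp add: sum_distrib_left mult.commute)
  also have "\<dots> \<le> q * real (N + 1)"
    by (rule mult_left_mono[OF sum_measure_grid_lower_set_le[OF assms(1,5)]]) (simp add: q_def)
  finally show ?thesis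
    by (simp add: q_def mult.commute)
qed

text \<open>Borel-Cantelli: the grid deviation events have probability \<open>O(1/n\<^sup>2)\<close>.\<close>
lemma AE_eventually_notin_grid_deviation_set:
  fixes L W :: "nat \<Rightarrow> 'a \<Rightarrow> nat \<Rightarrow> real"
  assumes "prob_space M" and b: "b > 0" and \<delta>: "\<delta> > 0"
    and L: "\<And>n. n \<ge> 1 \<Longrightarrow> L n \<in> M \<rightarrow>\<^sub>M Pi\<^sub>M {..<n} (\<lambda>_. borel)"
    and W: "\<And>n. n \<ge> 1 \<Longrightarrow> W n \<in> M \<rightarrow>\<^sub>M Pi\<^sub>M {..<n} (\<lambda>_. borel)"
    and indep: "\<And>n. n \<ge> 1 \<Longrightarrow>
      prob_space.indep_var M (Pi\<^sub>M {..<n} (\<lambda>_. borel)) (L n) (Pi\<^sub>M {..<n} (\<lambda>_. borel)) (W n)"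
    and dir: "\<And>n. n \<ge> 1 \<Longrightarrow> distr M (Pi\<^sub>M {..<n} (\<lambda>_. borel)) (W n) = dirichlet_sym n b"
  shows "AE \<omega> in M. eventually (\<lambda>n. \<omega> \<notin> grid_deviation_set M (L n) (W n) n N \<delta>) sequentially"
proof -
  interpret prob_space M
    by fact
  let ?B = "\<lambda>n. grid_deviation_set M (L n) (W n) n N \<delta>"
  define C where "C = real (N + 1) * 2 / (\<delta>^4 * b^2)"
  have B0: "?B 0 = {}"
    using \<delta> by (auto simp: grid_deviation_set_def lower_set_def)
  have events: "?B n \<in> events" for n
    using L W B0 by (cases "n = 0") (auto intro: sets_grid_deviation_set)
  have "measure M (?B n) \<le> C * inverse (real n ^ 2)" if "n \<ge> 1" for n
    using measure_grid_deviation_set_le[OF assms(1) that b \<delta> L[OF that] W[OF that] indep[OF that] dir[OF that]]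
    by (simp add: C_def field_simps power_mult_distrib)
  then have "summable (\<lambda>n. measure M (?B n))"
    by (intro summable_comparison_test'[where N = 1, OF summable_mult[OF inverse_power_summable]]) auto
  then have "AE \<omega> in M. eventually (\<lambda>n. \<omega> \<in> space M - ?B n) sequentially"
    using events by (intro borel_cantelli_AE1) (auto simp: less_top[symmetric])
  then show ?thesis
    by (auto elim: AE_mp eventually_mono)
qed

lemma kolmogorov_dist_le_of_notin_grid_deviation_set:
  assumes "\<omega> \<in> space M" "\<omega> \<notin> grid_deviation_set M L W n N (1 / real N)"
    and inj: "inj_on (L \<omega>) {..<n}" and W: "\<And>i. i < n \<Longrightarrow> 0 \<le> W \<omega> i" and N: "0 < N" "N \<le> n"
  shows "kolmogorov_dist (atomic_cdf n (L \<omega>) (\<lambda>_. 1 / real n)) (atomic_cdf n (L \<omega>) (W \<omega>)) \<le> 3 / real N"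
proof -
  have "kolmogorov_dist (atomic_cdf n (L \<omega>) (\<lambda>_. 1 / real n)) (atomic_cdf n (L \<omega>) (W \<omega>))
        \<le> 1 / real N + 1 / real N + 1 / real n"
    using assms by (intro kolmogorov_dist_atomic_le) (auto simp: grid_deviation_set_def not_less)
  also have "\<dots> \<le> 3 / real N"
    using N frac_le[of 1 1 "real N" "real n"] by simp
  finally show ?thesis .
qed

lemma LIMSEQ_zero_if_eventually_le:
  fixes f :: "nat \<Rightarrow> real"
  assumes "\<And>n. 0 \<le> f n" and "\<And>N. eventually (\<lambda>n. f n \<le> c / real (Suc N)) sequentially"
  shows "f \<longlonglongrightarrow> 0"
proof (rule order_tendstoI)
  fix e :: real assume "e > 0"
  have "(\<lambda>N. c / real (Suc N)) \<longlonglongrightarrow> 0"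
    using LIMSEQ_Suc[OF lim_const_over_n[of c]] by simp
  then have "eventually (\<lambda>N. c / real (Suc N) < e) sequentially"
    using \<open>e > 0\<close> by (rule order_tendstoD)
  then obtain N where N: "c / real (Suc N) < e"
    by (auto simp: eventually_sequentially)
  show "eventually (\<lambda>n. f n < e) sequentially"
    using assms(2)[of N] by eventually_elim (use N in simp)
qed (use assms(1) in \<open>auto intro: always_eventually order.strict_trans2\<close>)

lemma AE_eventually_kolmogorov_dist_le:
  fixes L W :: "nat \<Rightarrow> 'a \<Rightarrow> nat \<Rightarrow> real"
  assumes "prob_space M" and "b > 0"
    and L: "\<And>n. n \<ge> 1 \<Longrightarrow> L n \<in> M \<rightarrow>\<^sub>M Pi\<^sub>M {..<n} (\<lambda>_. borel)"
    and W: "\<And>n. n \<ge> 1 \<Longrightarrow> W n \<in> M \<rightarrow>\<^sub>M Pi\<^sub>M {..<n} (\<lambda>_. borel)"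
    and inj: "\<And>n. n \<ge> 1 \<Longrightarrow> AE \<omega> in M. inj_on (L n \<omega>) {..<n}"
    and indep: "\<And>n. n \<ge> 1 \<Longrightarrow>
      prob_space.indep_var M (Pi\<^sub>M {..<n} (\<lambda>_. borel)) (L n) (Pi\<^sub>M {..<n} (\<lambda>_. borel)) (W n)"
    and dir: "\<And>n. n \<ge> 1 \<Longrightarrow> distr M (Pi\<^sub>M {..<n} (\<lambda>_. borel)) (W n) = dirichlet_sym n b"
  shows "AE \<omega> in M. \<forall>N. eventually (\<lambda>n. kolmogorov_dist (atomic_cdf n (L n \<omega>) (\<lambda>_. 1 / real n))
                                   (atomic_cdf n (L n \<omega>) (W n \<omega>)) \<le> 3 / real (Suc N)) sequentially"
proof -
  interpret prob_space M
    by fact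
  have "AE \<omega> in M. \<forall>n. n \<ge> 1 \<longrightarrow> inj_on (L n \<omega>) {..<n} \<and> (\<forall>i<n. 0 \<le> W n \<omega> i)"
    unfolding AE_all_countable
  proof
    fix n :: nat
    show "AE \<omega> in M. n \<ge> 1 \<longrightarrow> inj_on (L n \<omega>) {..<n} \<and> (\<forall>i<n. 0 \<le> W n \<omega> i)"
    proof (cases "n \<ge> 1")
      case True
      show ?thesis
        using inj[OF True] AE_pos_if_distr_dirichlet_sym[OF W[OF True] dir[OF True]]
        by eventually_elim (auto intro: less_imp_le)
    qed simp
  qed
  moreover have "AE \<omega> in M. \<forall>N. eventually
                   (\<lambda>n. \<omega> \<notin> grid_deviation_set M (L n) (W n) n (Suc N) (1 / real (Suc N))) sequentially"
    unfolding AE_all_countable using assms by (intro allI AE_eventually_notin_grid_deviation_set) auto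
  ultimately show ?thesis
    using AE_space
  proof eventually_elim
    case (elim \<omega>)
    show ?case
    proof
      fix N
      show "eventually (\<lambda>n. kolmogorov_dist (atomic_cdf n (L n \<omega>) (\<lambda>_. 1 / real n))
                            (atomic_cdf n (L n \<omega>) (W n \<omega>)) \<le> 3 / real (Suc N)) sequentially"
        using spec[OF elim(2), of N] eventually_ge_at_top[of "Suc N"]
        by eventually_elim (rule kolmogorov_dist_le_of_notin_grid_deviation_set, use elim in auto)
    qed
  qed
qed

theorem theorem4p2:
  fixes M :: "'a measure" and \<beta> :: real
    and lam :: "nat \<Rightarrow> 'a \<Rightarrow> nat \<Rightarrow> real"
    and w :: "nat \<Rightarrow> 'a \<Rightarrow> nat \<Rightarrow> real"
  assumes "prob_space M"
    and "\<beta> > 0"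
    and lam_meas: "\<And>n. n \<ge> 1 \<Longrightarrow>
           (\<lambda>\<omega>. restrict (lam n \<omega>) {..<n}) \<in> M \<rightarrow>\<^sub>M PiM {..<n} (\<lambda>_. borel)"
    and w_meas: "\<And>n. n \<ge> 1 \<Longrightarrow>
           (\<lambda>\<omega>. restrict (w n \<omega>) {..<n}) \<in> M \<rightarrow>\<^sub>M PiM {..<n} (\<lambda>_. borel)"
    and distinct: "\<And>n. n \<ge> 1 \<Longrightarrow>
           AE \<omega> in M. \<forall>i<n. \<forall>j<n. i \<noteq> j \<longrightarrow> lam n \<omega> i \<noteq> lam n \<omega> j"
    and w_dirichlet: "\<And>n. n \<ge> 1 \<Longrightarrow>
           distr M (PiM {..<n} (\<lambda>_. borel)) (\<lambda>\<omega>. restrict (w n \<omega>) {..<n})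
             = dirichlet_sym n (\<beta> / 2)"
    and indep: "\<And>n. n \<ge> 1 \<Longrightarrow>
           prob_space.indep_var M
             (PiM {..<n} (\<lambda>_. borel)) (\<lambda>\<omega>. restrict (lam n \<omega>) {..<n})
             (PiM {..<n} (\<lambda>_. borel)) (\<lambda>\<omega>. restrict (w n \<omega>) {..<n})"
  shows "AE \<omega> in M.
           (\<lambda>n. kolmogorov_dist (atomic_cdf n (lam n \<omega>) (\<lambda>_. 1 / real n))
                                 (atomic_cdf n (lam n \<omega>) (w n \<omega>))) \<longlonglongrightarrow> 0"
proof -
  define L where "L = (\<lambda>n \<omega>. restrict (lam n \<omega>) {..<n})"
  define W where "W = (\<lambda>n \<omega>. restrict (w n \<omega>) {..<n})"
  have "AE \<omega> in M. inj_on (L n \<omega>) {..<n}" if "n \<ge> 1" for n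
    using distinct[OF that] by eventually_elim (auto simp: L_def inj_on_def)
  then have bound: "AE \<omega> in M. \<forall>N. eventually (\<lambda>n. kolmogorov_dist (atomic_cdf n (L n \<omega>) (\<lambda>_. 1 / real n))
               (atomic_cdf n (L n \<omega>) (W n \<omega>)) \<le> 3 / real (Suc N)) sequentially"
    using \<open>\<beta> > 0\<close> unfolding L_def W_def
    by (intro AE_eventually_kolmogorov_dist_le[where b = "\<beta> / 2"] assms) (auto simp: L_def)
  have restrict_eq:
    "kolmogorov_dist (atomic_cdf n (lam n \<omega>) (\<lambda>_. 1 / real n)) (atomic_cdf n (lam n \<omega>) (w n \<omega>))
     = kolmogorov_dist (atomic_cdf n (L n \<omega>) (\<lambda>_. 1 / real n)) (atomic_cdf n (L n \<omega>) (W n \<omega>))" for n \<omega>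
    by (auto simp: L_def W_def intro!: arg_cong2[where f = kolmogorov_dist] atomic_cdf_cong)
  show ?thesis
    using bound unfolding restrict_eq
    by eventually_elim
       (rule LIMSEQ_zero_if_eventually_le[where c = 3], auto simp: kolmogorov_dist_atomic_nonneg)
qed

end
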